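(* Let $A$ be a commutative ring, $\sigma$ a hereditary torsion theory on $A$-modules, $\mathfrak{a}\subseteq A$ an ideal and $p:A\to A/\mathfrak{a}$ the canonical projection. Then $A$ is totally $\sigma$-artinian if and only if $\mathfrak{a}$ is a totally $\sigma$-artinian $A$-module and $A/\mathfrak{a}$ is a totally $\sigma$-artinian $A$-module (equivalently, the ring $A/\mathfrak{a}$ is totally $p(\sigma)$-artinian).
   Context: $\mathcal{L}(\sigma)$ is the Gabriel filter of $\sigma$. An $A$-module $M$ is totally $\sigma$-artinian if for every descending chain of submodules $N_1\supseteq N_2\supseteq\cdots$ there exist $m$ and $\mathfrak{h}\in\mathcal{L}(\sigma)$ with $N_m\mathfrak{h}\subseteq N_s$ for all $s\ge m$; the ring $A$ is totally $\sigma$-artinian if $A$ is so as an $A$-module. $p(\sigma)$ is the hereditary torsion theory on $A/\mathfrak{a}$-modules with Gabriel filter $\{\mathfrak{b}: p^{-1}(\mathfrak{b})\in\mathcal{L}(\sigma)\}$, and the ring $A/\mathfrak{a}$ is totally $p(\sigma)$-artinian if the analogous chain condition holds for its ideals with $\mathfrak{h}\in\mathcal{L}(p(\sigma))$. *)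

theory Defs
  imports "HOL-Algebra.Algebra"
begin

definition colon_ideal :: "('a, 'b) ring_scheme \<Rightarrow> 'a set \<Rightarrow> 'a \<Rightarrow> 'a set" where
  "colon_ideal R J r = {x \<in> carrier R. x \<otimes>\<^bsub>R\<^esub> r \<in> J}"

text \<open>Gabriel filter (= hereditary torsion theory) on a commutative ring R, as a set of ideals.\<close>
definition gabriel_filter :: "('a, 'b) ring_scheme \<Rightarrow> 'a set set \<Rightarrow> bool" where
  "gabriel_filter R L \<longleftrightarrow>
     (\<forall>J\<in>L. ideal J R) \<and>
     carrier R \<in> L \<and>
     (\<forall>J\<in>L. \<forall>K. ideal K R \<and> J \<subseteq> K \<longrightarrow> K \<in> L) \<and>
     (\<forall>J\<in>L. \<forall>K\<in>L. J \<inter> K \<in> L) \<and>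
     (\<forall>J\<in>L. \<forall>r\<in>carrier R. colon_ideal R J r \<in> L) \<and>
     (\<forall>K J. ideal K R \<and> J \<in> L \<and> (\<forall>r\<in>J. colon_ideal R K r \<in> L) \<longrightarrow> K \<in> L)"

definition submod_ideal_prod ::
  "('a, 'c) ring_scheme \<Rightarrow> ('a, 'b) module \<Rightarrow> 'b set \<Rightarrow> 'a set \<Rightarrow> 'b set" where
  "submod_ideal_prod R M N h =
     \<Inter> {K. submodule K R M \<and> (\<forall>a\<in>h. \<forall>x\<in>N. a \<odot>\<^bsub>M\<^esub> x \<in> K)}"

definition totally_sigma_artinian ::
  "('a, 'c) ring_scheme \<Rightarrow> 'a set set \<Rightarrow> ('a, 'b) module \<Rightarrow> bool" where
  "totally_sigma_artinian R L M \<longleftrightarrow>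
     (\<forall>N :: nat \<Rightarrow> 'b set.
        (\<forall>n. submodule (N n) R M) \<and> (\<forall>n. N (Suc n) \<subseteq> N n) \<longrightarrow>
        (\<exists>m. \<exists>h\<in>L. \<forall>s\<ge>m. submod_ideal_prod R M (N m) h \<subseteq> N s))"

definition ring_module :: "('a, 'c) ring_scheme \<Rightarrow> ('a, 'a) module" where
  "ring_module R = \<lparr>carrier = carrier R, monoid.mult = monoid.mult R, one = monoid.one R,
     ring.zero = ring.zero R, ring.add = ring.add R, smult = monoid.mult R\<rparr>"

definition ideal_module :: "('a, 'c) ring_scheme \<Rightarrow> 'a set \<Rightarrow> ('a, 'a) module" where
  "ideal_module R I = (ring_module R)\<lparr>carrier := I\<rparr>"

definition quot_smult :: "('a, 'c) ring_scheme \<Rightarrow> 'a set \<Rightarrow> 'a \<Rightarrow> 'a set \<Rightarrow> 'a set" where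
  "quot_smult R I r C = monoid.mult (R Quot I) (a_r_coset R I r) C"

definition quotient_module :: "('a, 'c) ring_scheme \<Rightarrow> 'a set \<Rightarrow> ('a, 'a set) module" where
  "quotient_module R I = \<lparr>carrier = carrier (R Quot I), monoid.mult = monoid.mult (R Quot I),
     one = monoid.one (R Quot I), ring.zero = ring.zero (R Quot I), ring.add = ring.add (R Quot I),
     smult = quot_smult R I\<rparr>"

definition proj_filter :: "('a, 'c) ring_scheme \<Rightarrow> 'a set \<Rightarrow> 'a set set \<Rightarrow> 'a set set set" where
  "proj_filter R I L =
     {B. ideal B (R Quot I) \<and> {x \<in> carrier R. I +>\<^bsub>R\<^esub> x \<in> B} \<in> L}"

end

theory Submission
  imports Defs
begin

text \<open>Submodules of the ideal \<open>I\<close> and of \<open>R/I\<close> are ideals of \<open>R\<close> inside \<open>I\<close>,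
  resp. ideals of \<open>R/I\<close>; a descending chain in either is a chain in \<open>R\<close> or pulls back
  to one, so the chain condition passes down.
  Conversely, let \<open>N n\<close> be a descending chain of ideals of \<open>R\<close>. The chains \<open>N n \<inter> I\<close>
  and \<open>(N n + I)/I\<close> provide \<open>h\<^sub>1, h\<^sub>2 \<in> L\<close> and an index \<open>m\<close>. For \<open>x \<in> N m\<close>, \<open>r \<in> h\<^sub>2\<close>
  and \<open>s \<ge> m\<close> write \<open>r x = i + y\<close> with \<open>i \<in> I\<close>, \<open>y \<in> N s\<close>; then \<open>i \<in> N m \<inter> I\<close>, so \<open>t r x \<in> N s\<close>
  for every \<open>t \<in> h\<^sub>1\<close>. Thus the ideal of elements mapping \<open>N m\<close> into every \<open>N s\<close>
  contains all products \<open>t r\<close>, and the transitivity axiom of a Gabriel filter puts it into \<open>L\<close>.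
  Finally, \<open>L\<close> and the induced filter on \<open>R/I\<close> correspond under images and preimages
  along the projection.\<close>

lemma smult_ring_module [simp]: "smult (ring_module R) a x = a \<otimes>\<^bsub>R\<^esub> x"
  by (simp add: ring_module_def)

lemma smult_ideal_module [simp]: "smult (ideal_module R I) a x = a \<otimes>\<^bsub>R\<^esub> x"
  by (simp add: ideal_module_def ring_module_def)

lemma smult_quotient_module [simp]:
  "smult (quotient_module R I) a C = (I +>\<^bsub>R\<^esub> a) \<otimes>\<^bsub>R Quot I\<^esub> C"
  by (simp add: quotient_module_def quot_smult_def)

lemma submod_ideal_prod_subset_iff:
  assumes "submodule K R M"
  shows "submod_ideal_prod R M N h \<subseteq> K \<longleftrightarrow> (\<forall>a\<in>h. \<forall>x\<in>N. a \<odot>\<^bsub>M\<^esub> x \<in> K)"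
  unfolding submod_ideal_prod_def using assms by blast

lemma totally_sigma_artinianI:
  assumes "\<And>N :: nat \<Rightarrow> 'b set. (\<And>n. submodule (N n) R M) \<Longrightarrow> (\<And>n. N (Suc n) \<subseteq> N n) \<Longrightarrow>
             \<exists>m. \<exists>h\<in>L. \<forall>s\<ge>m. \<forall>a\<in>h. \<forall>x\<in>N m. a \<odot>\<^bsub>M\<^esub> x \<in> N s"
  shows "totally_sigma_artinian R L (M :: ('a, 'b) module)"
  unfolding totally_sigma_artinian_def
proof (intro allI impI)
  fix N :: "nat \<Rightarrow> 'b set"
  assume N: "(\<forall>n. submodule (N n) R M) \<and> (\<forall>n. N (Suc n) \<subseteq> N n)"
  then obtain m h where "h \<in> L" "\<forall>s\<ge>m. \<forall>a\<in>h. \<forall>x\<in>N m. a \<odot>\<^bsub>M\<^esub> x \<in> N s"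
    using assms by blast
  with N show "\<exists>m. \<exists>h\<in>L. \<forall>s\<ge>m. submod_ideal_prod R M (N m) h \<subseteq> N s"
    by (simp add: submod_ideal_prod_subset_iff) blast
qed

lemma totally_sigma_artinianE:
  assumes "totally_sigma_artinian R L (M :: ('a, 'b) module)"
    and N: "\<And>n. submodule (N n) R M" and "\<And>n. N (Suc n) \<subseteq> N n"
  obtains m h where "h \<in> L" "\<And>s a x. m \<le> s \<Longrightarrow> a \<in> h \<Longrightarrow> x \<in> N m \<Longrightarrow> a \<odot>\<^bsub>M\<^esub> x \<in> N s"
proof -
  from assms obtain m h where "h \<in> L" and mh: "\<forall>s\<ge>m. submod_ideal_prod R M (N m) h \<subseteq> N s"
    unfolding totally_sigma_artinian_def by blast
  moreover have "a \<odot>\<^bsub>M\<^esub> x \<in> N s" if "m \<le> s" "a \<in> h" "x \<in> N m" for s a x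
    using mh that submod_ideal_prod_subset_iff[OF N[of s], of "N m" h] by blast
  ultimately show thesis
    using that by blast
qed

lemma subgroup_cong:
  assumes "carrier G = carrier G'" "monoid.mult G = monoid.mult G'" "one G = one G'"
  shows "subgroup H G \<longleftrightarrow> subgroup H G'"
  using assms unfolding subgroup_def m_inv_def by simp

lemma (in cring) ideal_iff_subgroup_l_closed:
  "ideal H R \<longleftrightarrow> subgroup H (add_monoid R) \<and> (\<forall>a\<in>carrier R. \<forall>x\<in>H. a \<otimes> x \<in> H)"
proof
  assume "ideal H R"
  then show "subgroup H (add_monoid R) \<and> (\<forall>a\<in>carrier R. \<forall>x\<in>H. a \<otimes> x \<in> H)"
    by (simp add: additive_subgroup.a_subgroup ideal.axioms(1) ideal.I_l_closed)
next
  assume H: "subgroup H (add_monoid R) \<and> (\<forall>a\<in>carrier R. \<forall>x\<in>H. a \<otimes> x \<in> H)"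
  then have "H \<subseteq> carrier R"
    using subgroup.subset by fastforce
  with H show "ideal H R"
    by (intro idealI ring_axioms) (auto simp: subset_iff, metis m_comm)
qed

lemma (in cring) submodule_ring_module_iff:
  "submodule H R (ring_module R) \<longleftrightarrow> ideal H R"
proof -
  have "subgroup H (add_monoid (ring_module R)) \<longleftrightarrow> subgroup H (add_monoid R)"
    by (rule subgroup_cong) (simp_all add: ring_module_def)
  then show ?thesis
    unfolding submodule_def submodule_axioms_def ideal_iff_subgroup_l_closed by auto
qed

lemma (in cring) submodule_ideal_module_iff:
  assumes "ideal I R"
  shows "submodule H R (ideal_module R I) \<longleftrightarrow> ideal H R \<and> H \<subseteq> I"
proof -
  have I: "subgroup I (add_monoid R)"
    using assms by (simp add: additive_subgroup.a_subgroup ideal.axioms(1))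
  have "subgroup H (add_monoid (ideal_module R I)) \<longleftrightarrow> subgroup H ((add_monoid R)\<lparr>carrier := I\<rparr>)"
    by (rule subgroup_cong) (simp_all add: ideal_module_def ring_module_def)
  also have "\<dots> \<longleftrightarrow> subgroup H (add_monoid R) \<and> H \<subseteq> I"
    using add.subgroup_incl[OF _ I] add.incl_subgroup[OF I] subgroup.subset by fastforce
  finally show ?thesis
    unfolding submodule_def submodule_axioms_def ideal_iff_subgroup_l_closed by auto
qed

lemma carrier_FactRing: "carrier (R Quot I) = (\<lambda>x. I +>\<^bsub>R\<^esub> x) ` carrier R"
  by (auto simp add: FactRing_def A_RCOSETS_def')

lemma FactRing_mult_rcos:
  assumes "ideal I R" "a \<in> carrier R" "b \<in> carrier R"
  shows "(I +>\<^bsub>R\<^esub> a) \<otimes>\<^bsub>R Quot I\<^esub> (I +>\<^bsub>R\<^esub> b) = I +>\<^bsub>R\<^esub> (a \<otimes>\<^bsub>R\<^esub> b)"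
  using ideal.rcoset_mult_add[OF assms] by (simp add: FactRing_def)

lemma (in cring) submodule_quotient_module_iff:
  assumes "ideal I R"
  shows "submodule H R (quotient_module R I) \<longleftrightarrow> ideal H (R Quot I)"
proof -
  have "subgroup H (add_monoid (quotient_module R I)) \<longleftrightarrow> subgroup H (add_monoid (R Quot I))"
    by (rule subgroup_cong) (simp_all add: quotient_module_def)
  then show ?thesis
    unfolding submodule_def submodule_axioms_def
      cring.ideal_iff_subgroup_l_closed[OF ideal.quotient_is_cring[OF assms cring_axioms]]
    by (auto simp: carrier_FactRing)
qed

lemma (in cring) ideal_colon_ideal:
  assumes "ideal K R" "r \<in> carrier R"
  shows "ideal (colon_ideal R K r) R"
proof -
  interpret K: ideal K R by fact
  have "subgroup (colon_ideal R K r) (add_monoid R)"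
  proof (rule add.subgroupI)
    show "colon_ideal R K r \<noteq> {}"
      using assms(2) by (auto simp: colon_ideal_def intro!: exI[of _ \<zero>])
  next
    fix a b assume "a \<in> colon_ideal R K r" "b \<in> colon_ideal R K r"
    then show "\<ominus> a \<in> colon_ideal R K r" "a \<oplus> b \<in> colon_ideal R K r"
      using assms(2) by (auto simp: colon_ideal_def l_minus l_distr)
  qed (auto simp: colon_ideal_def)
  moreover have "a \<otimes> x \<in> colon_ideal R K r" if "a \<in> carrier R" "x \<in> colon_ideal R K r" for a x
    using that assms(2) K.I_l_closed by (auto simp: colon_ideal_def m_assoc)
  ultimately show ?thesis
    by (simp add: ideal_iff_subgroup_l_closed)
qed

lemma (in cring) ideal_chain_annihilator:
  assumes "\<And>n. ideal (N n) R"
  shows "ideal {a \<in> carrier R. \<forall>s\<ge>m. \<forall>x\<in>N m. a \<otimes> x \<in> N s} R"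
proof -
  let ?S = "insert (carrier R) {colon_ideal R (N s) x | s x. m \<le> s \<and> x \<in> N m}"
  have "{a \<in> carrier R. \<forall>s\<ge>m. \<forall>x\<in>N m. a \<otimes> x \<in> N s} = \<Inter> ?S"
    by (auto simp: colon_ideal_def)
  moreover have "ideal (\<Inter> ?S) R"
    using assms ideal.Icarr[OF assms] ideal_colon_ideal oneideal by (intro i_Intersect) blast+
  ultimately show ?thesis
    by simp
qed

lemma gabriel_filter_ideal: "gabriel_filter R L \<Longrightarrow> J \<in> L \<Longrightarrow> ideal J R"
  unfolding gabriel_filter_def by blast

lemma gabriel_filter_upward_closed:
  "gabriel_filter R L \<Longrightarrow> J \<in> L \<Longrightarrow> ideal K R \<Longrightarrow> J \<subseteq> K \<Longrightarrow> K \<in> L"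
  unfolding gabriel_filter_def by blast

lemma (in cring) gabriel_filter_products:
  assumes L: "gabriel_filter R L" and H: "H \<in> L" and J: "J \<in> L" and K: "ideal K R"
    and products: "\<And>t r. t \<in> H \<Longrightarrow> r \<in> J \<Longrightarrow> t \<otimes> r \<in> K"
  shows "K \<in> L"
proof -
  have "colon_ideal R K r \<in> L" if r: "r \<in> J" for r
  proof (rule gabriel_filter_upward_closed[OF L H])
    show "ideal (colon_ideal R K r) R"
      using ideal_colon_ideal[OF K ideal.Icarr[OF gabriel_filter_ideal[OF L J] r]] .
    show "H \<subseteq> colon_ideal R K r"
      using ideal.Icarr[OF gabriel_filter_ideal[OF L H]] products r
      by (auto simp: colon_ideal_def)
  qed
  with L J K show ?thesis
    unfolding gabriel_filter_def by blast
qed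

lemma (in cring) mult_mem_of_kernel_and_quotient:
  assumes I: "ideal I R" and N: "ideal N R" and N': "ideal N' R" "N' \<subseteq> N"
    and x: "x \<in> N" and t: "t \<in> carrier R" and r: "r \<in> carrier R"
    and kernel: "\<forall>i\<in>N \<inter> I. t \<otimes> i \<in> N'"
    and quotient: "I +> (r \<otimes> x) \<in> (+>) I ` N'"
  shows "t \<otimes> r \<otimes> x \<in> N'"
proof -
  obtain y where y: "y \<in> N'" and rx_y: "I +> (r \<otimes> x) = I +> y"
    using quotient by blast
  have xc: "x \<in> carrier R" and yc: "y \<in> carrier R"
    using ideal.Icarr[OF N x] ideal.Icarr[OF N'(1) y] .
  have "r \<otimes> x \<ominus> y \<in> I"
    using quotient_eq_iff_same_a_r_cos[OF I _ yc] rx_y r xc by simp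
  moreover have "r \<otimes> x \<ominus> y \<in> N"
    using N x y N'(2) r
    by (simp add: a_minus_def additive_subgroup.a_closed additive_subgroup.a_inv_closed
        ideal.axioms(1) ideal.I_l_closed subsetD)
  ultimately have "t \<otimes> (r \<otimes> x \<ominus> y) \<oplus> t \<otimes> y \<in> N'"
    using kernel ideal.I_l_closed[OF N'(1) y t] N'(1)
    by (simp add: additive_subgroup.a_closed ideal.axioms(1))
  also have "t \<otimes> (r \<otimes> x \<ominus> y) \<oplus> t \<otimes> y = t \<otimes> r \<otimes> x"
    using t r xc yc by algebra
  finally show ?thesis .
qed

lemma (in cring) totally_sigma_artinian_ideal_module:
  assumes I: "ideal I R" and tsa: "totally_sigma_artinian R L (ring_module R)"
  shows "totally_sigma_artinian R L (ideal_module R I)"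
proof (rule totally_sigma_artinianI)
  fix N :: "nat \<Rightarrow> 'a set"
  assume N: "\<And>n. submodule (N n) R (ideal_module R I)" and chain: "\<And>n. N (Suc n) \<subseteq> N n"
  have "submodule (N n) R (ring_module R)" for n
    using N[of n] submodule_ideal_module_iff[OF I] submodule_ring_module_iff by blast
  with tsa obtain m h
    where "h \<in> L" "\<And>s a x. m \<le> s \<Longrightarrow> a \<in> h \<Longrightarrow> x \<in> N m \<Longrightarrow> a \<odot>\<^bsub>ring_module R\<^esub> x \<in> N s"
    using chain by (rule totally_sigma_artinianE) blast
  then show "\<exists>m. \<exists>h\<in>L. \<forall>s\<ge>m. \<forall>a\<in>h. \<forall>x\<in>N m. a \<odot>\<^bsub>ideal_module R I\<^esub> x \<in> N s"
    unfolding smult_ring_module smult_ideal_module by blast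
qed

lemma (in cring) totally_sigma_artinian_quotient_module:
  assumes L: "gabriel_filter R L" and I: "ideal I R"
    and tsa: "totally_sigma_artinian R L (ring_module R)"
  shows "totally_sigma_artinian R L (quotient_module R I)"
proof (rule totally_sigma_artinianI)
  fix N :: "nat \<Rightarrow> 'a set set"
  assume "\<And>n. submodule (N n) R (quotient_module R I)" and chain: "\<And>n. N (Suc n) \<subseteq> N n"
  then have N: "ideal (N n) (R Quot I)" for n
    using submodule_quotient_module_iff[OF I] by blast
  define P where "P n = {x \<in> carrier R. I +>\<^bsub>R\<^esub> x \<in> N n}" for n
  have "ideal (P n) R" for n
    unfolding P_def using ring_hom_ring.ideal_vimage[OF ideal.rcos_ring_hom_ring[OF I] N] .
  moreover have "P (Suc n) \<subseteq> P n" for n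
    unfolding P_def using chain by blast
  ultimately obtain m h where h: "h \<in> L" and kills:
    "\<And>s a x. m \<le> s \<Longrightarrow> a \<in> h \<Longrightarrow> x \<in> P m \<Longrightarrow> a \<odot>\<^bsub>ring_module R\<^esub> x \<in> P s"
    using submodule_ring_module_iff by (metis totally_sigma_artinianE[OF tsa])
  have "(I +>\<^bsub>R\<^esub> a) \<otimes>\<^bsub>R Quot I\<^esub> C \<in> N s" if "m \<le> s" "a \<in> h" "C \<in> N m" for s a C
  proof -
    obtain x where x: "x \<in> carrier R" "C = I +>\<^bsub>R\<^esub> x"
      using ideal.Icarr[OF N \<open>C \<in> N m\<close>] by (auto simp: carrier_FactRing)
    then have "x \<in> P m"
      using \<open>C \<in> N m\<close> unfolding P_def by simp
    with that kills have "I +>\<^bsub>R\<^esub> (a \<otimes>\<^bsub>R\<^esub> x) \<in> N s"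
      unfolding P_def smult_ring_module by blast
    moreover have "a \<in> carrier R"
      using ideal.Icarr[OF gabriel_filter_ideal[OF L h] \<open>a \<in> h\<close>] .
    ultimately show ?thesis
      using FactRing_mult_rcos[OF I _ x(1)] x(2) by simp
  qed
  with h show "\<exists>m. \<exists>h\<in>L. \<forall>s\<ge>m. \<forall>a\<in>h. \<forall>x\<in>N m. a \<odot>\<^bsub>quotient_module R I\<^esub> x \<in> N s"
    unfolding smult_quotient_module by blast
qed

lemma (in cring) chain_annihilator_mem_gabriel_filter:
  assumes L: "gabriel_filter R L" and I: "ideal I R"
    and N: "\<And>n. ideal (N n) R" and chain: "\<And>n. N (Suc n) \<subseteq> N n"
    and h\<^sub>1: "h\<^sub>1 \<in> L"
    and kills\<^sub>1: "\<And>s a x. m \<le> s \<Longrightarrow> a \<in> h\<^sub>1 \<Longrightarrow> x \<in> N m \<inter> I \<Longrightarrow> a \<otimes> x \<in> N s"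
    and h\<^sub>2: "h\<^sub>2 \<in> L"
    and kills\<^sub>2: "\<And>s a x. m \<le> s \<Longrightarrow> a \<in> h\<^sub>2 \<Longrightarrow> x \<in> N m \<Longrightarrow> I +> (a \<otimes> x) \<in> (+>) I ` N s"
  shows "{a \<in> carrier R. \<forall>s\<ge>m. \<forall>x\<in>N m. a \<otimes> x \<in> N s} \<in> L"
proof (rule gabriel_filter_products[OF L h\<^sub>1 h\<^sub>2 ideal_chain_annihilator[OF N]])
  fix t r assume t: "t \<in> h\<^sub>1" and r: "r \<in> h\<^sub>2"
  have tc: "t \<in> carrier R" and rc: "r \<in> carrier R"
    using ideal.Icarr[OF gabriel_filter_ideal[OF L h\<^sub>1] t] ideal.Icarr[OF gabriel_filter_ideal[OF L h\<^sub>2] r] .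
  have "t \<otimes> r \<otimes> x \<in> N s" if s: "m \<le> s" and x: "x \<in> N m" for s x
    using mult_mem_of_kernel_and_quotient[OF I N N lift_Suc_antimono_le[of N, OF chain s] x tc rc]
      kills\<^sub>1[OF s t] kills\<^sub>2[OF s r x]
    by blast
  with tc rc show "t \<otimes> r \<in> {a \<in> carrier R. \<forall>s\<ge>m. \<forall>x\<in>N m. a \<otimes> x \<in> N s}"
    by simp
qed

lemma (in cring) totally_sigma_artinian_ring_module:
  assumes L: "gabriel_filter R L" and I: "ideal I R"
    and ideal_tsa: "totally_sigma_artinian R L (ideal_module R I)"
    and quotient_tsa: "totally_sigma_artinian R L (quotient_module R I)"
  shows "totally_sigma_artinian R L (ring_module R)"
proof (rule totally_sigma_artinianI)
  fix N :: "nat \<Rightarrow> 'a set"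
  assume "\<And>n. submodule (N n) R (ring_module R)" and chain: "\<And>n. N (Suc n) \<subseteq> N n"
  then have N: "ideal (N n) R" for n
    using submodule_ring_module_iff by blast
  have antimono: "N s \<subseteq> N m" if "m \<le> s" for m s
    using lift_Suc_antimono_le[of N, OF chain that] .
  have "submodule (N n \<inter> I) R (ideal_module R I)" for n
    using submodule_ideal_module_iff[OF I] i_intersect[OF N I] by blast
  moreover have "N (Suc n) \<inter> I \<subseteq> N n \<inter> I" for n
    using chain by blast
  ultimately obtain m\<^sub>1 h\<^sub>1 where h\<^sub>1: "h\<^sub>1 \<in> L" and kills\<^sub>1:
    "\<And>s a x. m\<^sub>1 \<le> s \<Longrightarrow> a \<in> h\<^sub>1 \<Longrightarrow> x \<in> N m\<^sub>1 \<inter> I \<Longrightarrow>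
      a \<odot>\<^bsub>ideal_module R I\<^esub> x \<in> N s \<inter> I"
    by (rule totally_sigma_artinianE[OF ideal_tsa]) blast
  have "submodule ((+>) I ` N n) R (quotient_module R I)" for n
    using submodule_quotient_module_iff[OF I] ring_ideal_imp_quot_ideal[OF I N] by blast
  moreover have "(+>) I ` N (Suc n) \<subseteq> (+>) I ` N n" for n
    using chain by (rule image_mono)
  ultimately obtain m\<^sub>2 h\<^sub>2 where h\<^sub>2: "h\<^sub>2 \<in> L" and kills\<^sub>2:
    "\<And>s a C. m\<^sub>2 \<le> s \<Longrightarrow> a \<in> h\<^sub>2 \<Longrightarrow> C \<in> (+>) I ` N m\<^sub>2 \<Longrightarrow>
      a \<odot>\<^bsub>quotient_module R I\<^esub> C \<in> (+>) I ` N s"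
    by (rule totally_sigma_artinianE[OF quotient_tsa]) blast
  define m where "m = max m\<^sub>1 m\<^sub>2"
  have "{a \<in> carrier R. \<forall>s\<ge>m. \<forall>x\<in>N m. a \<otimes> x \<in> N s} \<in> L"
  proof (rule chain_annihilator_mem_gabriel_filter[where N = N and m = m, OF L I N chain h\<^sub>1 _ h\<^sub>2])
    fix s a x assume s: "m \<le> s"
    show "a \<otimes> x \<in> N s" if "a \<in> h\<^sub>1" "x \<in> N m \<inter> I"
      using kills\<^sub>1[of s a x] antimono[of m\<^sub>1 m] s that unfolding m_def by auto
    show "I +> (a \<otimes> x) \<in> (+>) I ` N s" if a: "a \<in> h\<^sub>2" and x: "x \<in> N m"
    proof -
      have "I +> x \<in> (+>) I ` N m\<^sub>2"
        using antimono[of m\<^sub>2 m] x unfolding m_def by auto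
      with kills\<^sub>2[OF _ a] s have "(I +> a) \<otimes>\<^bsub>R Quot I\<^esub> (I +> x) \<in> (+>) I ` N s"
        unfolding m_def by simp
      then show ?thesis
        using FactRing_mult_rcos[OF I ideal.Icarr[OF gabriel_filter_ideal[OF L h\<^sub>2] a]
            ideal.Icarr[OF N x]]
        by simp
    qed
  qed
  then show "\<exists>m. \<exists>h\<in>L. \<forall>s\<ge>m. \<forall>a\<in>h. \<forall>x\<in>N m. a \<odot>\<^bsub>ring_module R\<^esub> x \<in> N s"
    by (intro exI[of _ m] bexI) auto
qed

lemma (in cring) image_mem_proj_filter:
  assumes L: "gabriel_filter R L" and I: "ideal I R" and h: "h \<in> L"
  shows "(+>) I ` h \<in> proj_filter R I L"
proof -
  have image: "ideal ((+>) I ` h) (R Quot I)"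
    using ring_ideal_imp_quot_ideal[OF I gabriel_filter_ideal[OF L h]] .
  have "h \<subseteq> {x \<in> carrier R. I +> x \<in> (+>) I ` h}"
    using ideal.Icarr[OF gabriel_filter_ideal[OF L h]] by blast
  then have "{x \<in> carrier R. I +> x \<in> (+>) I ` h} \<in> L"
    using gabriel_filter_upward_closed[OF L h]
      ring_hom_ring.ideal_vimage[OF ideal.rcos_ring_hom_ring[OF I] image]
    by blast
  with image show ?thesis
    unfolding proj_filter_def by blast
qed

lemma (in cring) submodule_quotient_module_iff_FactRing:
  assumes "ideal I R"
  shows "submodule C R (quotient_module R I) \<longleftrightarrow> submodule C (R Quot I) (ring_module (R Quot I))"
  using submodule_quotient_module_iff[OF assms]
    cring.submodule_ring_module_iff[OF ideal.quotient_is_cring[OF assms cring_axioms]]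
  by blast

lemma (in cring) totally_sigma_artinian_FactRing:
  assumes L: "gabriel_filter R L" and I: "ideal I R"
    and tsa: "totally_sigma_artinian R L (quotient_module R I)"
  shows "totally_sigma_artinian (R Quot I) (proj_filter R I L) (ring_module (R Quot I))"
proof (rule totally_sigma_artinianI)
  fix N :: "nat \<Rightarrow> 'a set set"
  assume "\<And>n. submodule (N n) (R Quot I) (ring_module (R Quot I))"
    and chain: "\<And>n. N (Suc n) \<subseteq> N n"
  then have "submodule (N n) R (quotient_module R I)" for n
    using submodule_quotient_module_iff_FactRing[OF I] by blast
  then obtain m h where h: "h \<in> L" and kills:
    "\<And>s a C. m \<le> s \<Longrightarrow> a \<in> h \<Longrightarrow> C \<in> N m \<Longrightarrow> a \<odot>\<^bsub>quotient_module R I\<^esub> C \<in> N s"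
    using chain by (rule totally_sigma_artinianE[OF tsa]) blast
  then have "\<forall>s\<ge>m. \<forall>b\<in>(+>) I ` h. \<forall>C\<in>N m. b \<otimes>\<^bsub>R Quot I\<^esub> C \<in> N s"
    by auto
  with image_mem_proj_filter[OF L I h]
  show "\<exists>m. \<exists>B\<in>proj_filter R I L. \<forall>s\<ge>m. \<forall>b\<in>B. \<forall>C\<in>N m.
          b \<odot>\<^bsub>ring_module (R Quot I)\<^esub> C \<in> N s"
    unfolding smult_ring_module by blast
qed

lemma (in cring) totally_sigma_artinian_quotient_module_of_FactRing:
  assumes I: "ideal I R"
    and tsa: "totally_sigma_artinian (R Quot I) (proj_filter R I L) (ring_module (R Quot I))"
  shows "totally_sigma_artinian R L (quotient_module R I)"
proof (rule totally_sigma_artinianI)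
  fix N :: "nat \<Rightarrow> 'a set set"
  assume "\<And>n. submodule (N n) R (quotient_module R I)" and chain: "\<And>n. N (Suc n) \<subseteq> N n"
  then have "submodule (N n) (R Quot I) (ring_module (R Quot I))" for n
    using submodule_quotient_module_iff_FactRing[OF I] by blast
  then obtain m B where B: "B \<in> proj_filter R I L" and kills:
    "\<And>s b C. m \<le> s \<Longrightarrow> b \<in> B \<Longrightarrow> C \<in> N m \<Longrightarrow> b \<odot>\<^bsub>ring_module (R Quot I)\<^esub> C \<in> N s"
    using chain by (rule totally_sigma_artinianE[OF tsa]) blast
  moreover from B have "{x \<in> carrier R. I +> x \<in> B} \<in> L"
    unfolding proj_filter_def by blast
  ultimately show "\<exists>m. \<exists>h\<in>L. \<forall>s\<ge>m. \<forall>a\<in>h. \<forall>C\<in>N m. a \<odot>\<^bsub>quotient_module R I\<^esub> C \<in> N s"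
    by (intro exI[of _ m] bexI[of _ "{x \<in> carrier R. I +> x \<in> B}"]) auto
qed

theorem mainTheorem11:
  fixes R :: "('a, 'c) ring_scheme" and L :: "'a set set" and I :: "'a set"
  assumes "cring R"
    and "gabriel_filter R L"
    and "ideal I R"
  shows "(totally_sigma_artinian R L (ring_module R) \<longleftrightarrow>
           totally_sigma_artinian R L (ideal_module R I) \<and>
           totally_sigma_artinian R L (quotient_module R I))
       \<and> (totally_sigma_artinian R L (quotient_module R I) \<longleftrightarrow>
           totally_sigma_artinian (R Quot I) (proj_filter R I L) (ring_module (R Quot I)))"
proof -
  interpret cring R by fact
  show ?thesis
    using totally_sigma_artinian_ideal_module[OF assms(3)]
      totally_sigma_artinian_quotient_module[OF assms(2,3)]
      totally_sigma_artinian_ring_module[OF assms(2,3)]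
      totally_sigma_artinian_FactRing[OF assms(2,3)]
      totally_sigma_artinian_quotient_module_of_FactRing[OF assms(3)]
    by blast
qed

end
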